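(* Consider the APO procedure under the Bradley–Terry model with the DPO loss (see context), under realizability and boundedness. Then for each iteration $t\in\{0,\dots,T\}$, with probability at least $1-\delta$, $$\mathbb{E}_{x\sim\rho,\,y_1,y_2\sim\pi_t(\cdot|x)}\Big[\big(r^*(x,y_1)-r^*(x,y_2)-r_t(x,y_1)+r_t(x,y_2)\big)^2\Big]\le O\Big(\frac{\log(|\Pi|/\delta)}{N}\Big),$$ where $r_t(x,y)=\beta\log\hat{\pi}_{t+1}(y|x)-\beta\log\pi_t(y|x)$.
   Context: Let $\mathcal{X},\mathcal{Y}$ be finite sets, $\rho$ a distribution on $\mathcal{X}$, $\Pi$ a finite class of full-support policies. Bradley–Terry model: latent reward $r^*:\mathcal{X}\times\mathcal{Y}\to[-1,1]$ with $\mathbb{P}(y_1\succ y_2|x)=\sigma(r^*(x,y_1)-r^*(x,y_2))$, $\sigma(z)=1/(1+e^{-z})$. APO procedure with $\pi_{\mathrm{ref}}\in\Pi$, $\beta>0$, $\alpha$, $T$, $N$: $\pi_0=\hat{\pi}_0=\pi_{\mathrm{ref}}$; for $t=0,\dots,T$: collect $\mathcal{D}_t$ of $N$ triples $(x,y^w,y^l)$, $x\sim\rho$, two responses drawn from $\pi_t(\cdot|x)$ labeled by the Bradley–Terry model; with $r_\pi(x,y)=\beta\log\frac{\pi(y|x)}{\pi_t(y|x)}$, let $\hat{\pi}_{t+1}\in\arg\min_{\pi\in\Pi}\frac1N\sum_{\mathcal{D}_t}-\log\sigma(r_\pi(x,y^w)-r_\pi(x,y^l))$; let $\pi_{t+1}(y|x)\propto\hat{\pi}_{t+1}(y|x)(\hat{\pi}_{t+1}(y|x)/\hat{\pi}_t(y|x))^{\alpha}$.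 Realizability: for each $\pi\in\Pi$, $\pi(\cdot|x)\exp(r^*(x,\cdot)/\beta)/Z_\pi(x)\in\Pi$. Boundedness: $\beta\log\frac{\pi(y|x)}{\pi_t(y|x)}\in[-R,R]$ for all $\pi,\pi_t\in\Pi$, $x,y$. $O(\cdot)$ hides constant factors depending only on $R$. *)

theory Defs
  imports "HOL-Probability.Probability"
begin

text \<open>Contexts are natural numbers (restricted to a finite set X), responses are natural
numbers (restricted to a finite set Y).\<close>

type_synonym policy = "nat \<Rightarrow> nat pmf"
type_synonym triple = "nat \<times> nat \<times> nat"

definition sigmoid :: "real \<Rightarrow> real" where
  "sigmoid z = 1 / (1 + exp (- z))"

definition full_support :: "nat set \<Rightarrow> nat set \<Rightarrow> policy \<Rightarrow> bool" where
  "full_support X Y \<pi> \<longleftrightarrow> (\<forall>x\<in>X. set_pmf (\<pi> x) = Y)"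

definition normalize_policy :: "nat set \<Rightarrow> (nat \<Rightarrow> nat \<Rightarrow> real) \<Rightarrow> policy" where
  "normalize_policy Y w x = embed_pmf (\<lambda>y. if y \<in> Y then w x y / (\<Sum>y'\<in>Y. w x y') else 0)"

definition tilt_policy :: "nat set \<Rightarrow> real \<Rightarrow> (nat \<Rightarrow> nat \<Rightarrow> real) \<Rightarrow> policy \<Rightarrow> policy" where
  "tilt_policy Y \<beta> r \<pi> = normalize_policy Y (\<lambda>x y. pmf (\<pi> x) y * exp (r x y / \<beta>))"

definition apo_update :: "nat set \<Rightarrow> real \<Rightarrow> policy \<Rightarrow> policy \<Rightarrow> policy" where
  "apo_update Y \<alpha> \<pi>hat_old \<pi>hat_new = normalize_policy Y
     (\<lambda>x y. pmf (\<pi>hat_new x) y * (pmf (\<pi>hat_new x) y / pmf (\<pi>hat_old x) y) powr \<alpha>)"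

text \<open>One labelled sample (x, y^w, y^l): x ~ rho, y1, y2 ~ pi(.|x) independently,
y1 preferred with probability sigma(r(x,y1) - r(x,y2)) (Bradley--Terry).\<close>
definition bt_sample :: "nat pmf \<Rightarrow> (nat \<Rightarrow> nat \<Rightarrow> real) \<Rightarrow> policy \<Rightarrow> triple pmf" where
  "bt_sample \<rho> r \<pi> =
     bind_pmf \<rho> (\<lambda>x. bind_pmf (\<pi> x) (\<lambda>y1. bind_pmf (\<pi> x) (\<lambda>y2.
       map_pmf (\<lambda>b. if b then (x, y1, y2) else (x, y2, y1))
         (bernoulli_pmf (sigmoid (r x y1 - r x y2))))))"

fun iid_pmf :: "nat \<Rightarrow> 'a pmf \<Rightarrow> 'a list pmf" where
  "iid_pmf 0 p = return_pmf []"
| "iid_pmf (Suc n) p = bind_pmf p (\<lambda>a. map_pmf (Cons a) (iid_pmf n p))"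

definition dpo_loss :: "real \<Rightarrow> policy \<Rightarrow> triple list \<Rightarrow> policy \<Rightarrow> real" where
  "dpo_loss \<beta> \<pi>t D \<pi> =
     (\<Sum>(x, yw, yl)\<leftarrow>D.
        - ln (sigmoid (\<beta> * ln (pmf (\<pi> x) yw / pmf (\<pi>t x) yw)
                       - \<beta> * ln (pmf (\<pi> x) yl / pmf (\<pi>t x) yl)))) / real (length D)"

definition is_dpo_argmin :: "policy set \<Rightarrow> real \<Rightarrow> policy \<Rightarrow> triple list \<Rightarrow> policy \<Rightarrow> bool" where
  "is_dpo_argmin Pol \<beta> \<pi>t D \<pi>hat \<longleftrightarrow>
     \<pi>hat \<in> Pol \<and> (\<forall>\<pi>\<in>Pol. dpo_loss \<beta> \<pi>t D \<pi>hat \<le> dpo_loss \<beta> \<pi>t D \<pi>)"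

text \<open>Distribution of the state (pi_t, hat pi_t) of APO. The selector sel t pi_t D_t
returns the chosen element hat pi_{t+1} of the argmin (ties broken arbitrarily).\<close>
primrec apo_state :: "nat set \<Rightarrow> nat pmf \<Rightarrow> (nat \<Rightarrow> nat \<Rightarrow> real) \<Rightarrow> real \<Rightarrow> nat
    \<Rightarrow> (nat \<Rightarrow> policy \<Rightarrow> triple list \<Rightarrow> policy) \<Rightarrow> policy \<Rightarrow> nat \<Rightarrow> (policy \<times> policy) pmf" where
  "apo_state Y \<rho> r \<alpha> N sel \<pi>ref 0 = return_pmf (\<pi>ref, \<pi>ref)"
| "apo_state Y \<rho> r \<alpha> N sel \<pi>ref (Suc t) =
     bind_pmf (apo_state Y \<rho> r \<alpha> N sel \<pi>ref t) (\<lambda>(\<pi>, \<pi>hat).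
       map_pmf (\<lambda>D. (apo_update Y \<alpha> \<pi>hat (sel t \<pi> D), sel t \<pi> D))
         (iid_pmf N (bt_sample \<rho> r \<pi>)))"

text \<open>Joint distribution of (pi_t, hat pi_{t+1}) in round t.\<close>
definition apo_round :: "nat set \<Rightarrow> nat pmf \<Rightarrow> (nat \<Rightarrow> nat \<Rightarrow> real) \<Rightarrow> real \<Rightarrow> nat
    \<Rightarrow> (nat \<Rightarrow> policy \<Rightarrow> triple list \<Rightarrow> policy) \<Rightarrow> policy \<Rightarrow> nat \<Rightarrow> (policy \<times> policy) pmf" where
  "apo_round Y \<rho> r \<alpha> N sel \<pi>ref t =
     bind_pmf (apo_state Y \<rho> r \<alpha> N sel \<pi>ref t) (\<lambda>(\<pi>, \<pi>hat).
       map_pmf (\<lambda>D. (\<pi>, sel t \<pi> D)) (iid_pmf N (bt_sample \<rho> r \<pi>)))"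

definition reward_sq_error :: "nat pmf \<Rightarrow> (nat \<Rightarrow> nat \<Rightarrow> real) \<Rightarrow> real \<Rightarrow> policy \<Rightarrow> policy \<Rightarrow> real" where
  "reward_sq_error \<rho> r \<beta> \<pi>t \<pi>hat =
     (let rt = (\<lambda>x y. \<beta> * ln (pmf (\<pi>hat x) y) - \<beta> * ln (pmf (\<pi>t x) y))
      in measure_pmf.expectation
           (bind_pmf \<rho> (\<lambda>x. bind_pmf (\<pi>t x) (\<lambda>y1. map_pmf (\<lambda>y2. (x, y1, y2)) (\<pi>t x))))
           (\<lambda>(x, y1, y2). (r x y1 - r x y2 - rt x y1 + rt x y2)\<^sup>2))"

end

(*
  Realizability yields pi* in Pi whose implicit reward gap
  beta log (pi*/pi_t)(x,y1) - beta log (pi*/pi_t)(x,y2) equals r*(x,y1) - r*(x,y2); the DPO loss is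
  then the negative log-likelihood of the Bradley-Terry labels, with pi* the true model. The usual
  maximum-likelihood argument (Markov's inequality for the product of square-root likelihood ratios
  and a union bound over Pi) shows that, with probability at least 1 - delta, the DPO minimizer
  has mean Bhattacharyya affinity with the true label distribution at least
  1 - log(|Pi|/delta)/N. On reward gaps bounded by 2 + 2R the sigmoid is bi-Lipschitz, and
  (sigma a - sigma b)^2 is at most 8 times the squared Hellinger distance, which converts the
  affinity bound into the squared-error bound. APO iterates keep full support, so the argument
  applies in every round.
*)
theory Submission
  imports Defs
begin

section \<open>Sigmoid inequalities\<close>

lemma sigmoid_pos: "0 < sigmoid z"
  unfolding sigmoid_def by (simp add: add_pos_pos)

lemma sigmoid_less_1: "sigmoid z < 1"
  unfolding sigmoid_def by (simp add: add_pos_pos)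

lemma sigmoid_minus: "sigmoid (- z) = 1 - sigmoid z"
proof -
  have "1 + exp z > 0" by (simp add: add_pos_pos)
  then show ?thesis unfolding sigmoid_def by (simp add: field_simps exp_minus)
qed

lemma sq_diff_le_bernoulli_hellinger:
  fixes a b :: real
  assumes "0 \<le> a" "a \<le> 1" "0 \<le> b" "b \<le> 1"
  shows "(a - b)\<^sup>2 \<le> 8 * (1 - (sqrt (a * b) + sqrt ((1 - a) * (1 - b))))"
proof -
  define sa sb sa' sb' where "sa = sqrt a" "sb = sqrt b" "sa' = sqrt (1 - a)" "sb' = sqrt (1 - b)"
  have sq: "sa\<^sup>2 = a" "sb\<^sup>2 = b" "sa'\<^sup>2 = 1 - a" "sb'\<^sup>2 = 1 - b"
    using assms by (auto simp: sa_sb_sa'_sb'_def)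
  have bounds: "0 \<le> sa" "sa \<le> 1" "0 \<le> sb" "sb \<le> 1"
    using assms by (auto simp: sa_sb_sa'_sb'_def)
  have hellinger: "1 - (sa * sb + sa' * sb') = ((sa - sb)\<^sup>2 + (sa' - sb')\<^sup>2) / 2"
    using sq by (simp add: power2_eq_square algebra_simps)
  have "(a - b)\<^sup>2 = (sa - sb)\<^sup>2 * (sa + sb)\<^sup>2"
    using sq by (simp add: power2_eq_square algebra_simps)
  also have "\<dots> \<le> (sa - sb)\<^sup>2 * 2\<^sup>2"
    using bounds by (intro mult_left_mono power_mono) auto
  also have "\<dots> \<le> 8 * (1 - (sa * sb + sa' * sb'))"
    unfolding hellinger by simp
  finally show ?thesis
    by (simp add: sa_sb_sa'_sb'_def real_sqrt_mult)
qed

lemma abs_diff_le_exp_diff: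
  fixes a b M :: real
  assumes "\<bar>a\<bar> \<le> M" "\<bar>b\<bar> \<le> M"
  shows "exp (- M) * \<bar>a - b\<bar> \<le> \<bar>exp a - exp b\<bar>"
proof -
  have *: "exp (- M) * (x - y) \<le> exp x - exp y" if "y \<le> x" "\<bar>y\<bar> \<le> M" for x y :: real
  proof -
    have "exp (- M) * (x - y) \<le> exp y * (x - y)"
      using that by (intro mult_right_mono) auto
    also have "\<dots> \<le> exp y * (exp (x - y) - 1)"
      using exp_ge_add_one_self[of "x - y"] by (intro mult_left_mono) (auto simp: algebra_simps)
    also have "\<dots> = exp x - exp y"
      by (simp add: algebra_simps exp_diff)
    finally show ?thesis .
  qed
  show ?thesis
    using *[of b a] *[of a b] assms by (cases "b \<le> a") auto
qed

lemma abs_diff_le_sigmoid_diff: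
  fixes d u M :: real
  assumes "\<bar>d\<bar> \<le> M" "\<bar>u\<bar> \<le> M"
  shows "\<bar>d - u\<bar> \<le> exp M * (1 + exp M)\<^sup>2 * \<bar>sigmoid d - sigmoid u\<bar>"
proof -
  define D where "D = (1 + exp (- d)) * (1 + exp (- u))"
  have "1 + exp (- d) > 0" "1 + exp (- u) > 0" by (simp_all add: add_pos_pos)
  then have "sigmoid d - sigmoid u = (exp (- u) - exp (- d)) / D"
    unfolding sigmoid_def D_def by (simp add: field_simps)
  moreover have "D > 0"
    unfolding D_def by (simp add: add_pos_pos)
  ultimately have exp_diff: "\<bar>exp (- u) - exp (- d)\<bar> = D * \<bar>sigmoid d - sigmoid u\<bar>"
    by (simp add: abs_div)
  have "D \<le> (1 + exp M) * (1 + exp M)"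
    unfolding D_def using assms by (intro mult_mono add_left_mono) (auto simp: add_pos_pos less_imp_le)
  then have D_le: "D \<le> (1 + exp M)\<^sup>2"
    by (simp add: power2_eq_square)
  have "\<bar>d - u\<bar> = exp M * (exp (- M) * \<bar>(- u) - (- d)\<bar>)"
    by (simp add: exp_minus)
  also have "\<dots> \<le> exp M * \<bar>exp (- u) - exp (- d)\<bar>"
    using abs_diff_le_exp_diff[of "- u" M "- d"] assms by simp
  also have "\<dots> \<le> exp M * ((1 + exp M)\<^sup>2 * \<bar>sigmoid d - sigmoid u\<bar>)"
    unfolding exp_diff using D_le by (intro mult_left_mono mult_right_mono) auto
  finally show ?thesis
    by (simp add: mult.assoc)
qed

lemma mult_exp_half_ln_diff:
  fixes a b :: real
  assumes "0 < a" "0 < b"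
  shows "b * exp ((ln a - ln b) / 2) = sqrt (b * a)"
proof -
  have "exp ((ln a - ln b) / 2) = sqrt (a / b)"
    using assms by (simp add: powr_half_sqrt[symmetric] powr_def ln_div)
  moreover have "sqrt (b * a) = b * sqrt (a / b)"
  proof -
    have "b * a = b\<^sup>2 * (a / b)"
      using assms by (simp add: power2_eq_square)
    then show ?thesis
      using assms by (simp only: real_sqrt_mult real_sqrt_abs abs_of_pos)
  qed
  ultimately show ?thesis
    by simp
qed

text \<open>The Bhattacharyya coefficient of the label distributions Bernoulli(sigmoid d) and
  Bernoulli(sigmoid u) of two Bradley--Terry models with reward gaps d and u.\<close>
definition sigmoid_affinity :: "real \<Rightarrow> real \<Rightarrow> real" where
  "sigmoid_affinity d u = sqrt (sigmoid d * sigmoid u) + sqrt (sigmoid (- d) * sigmoid (- u))"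

definition affinity_const :: "real \<Rightarrow> real" where
  "affinity_const M = 8 * exp (2 * M) * (1 + exp M) ^ 4"

lemma affinity_const_pos: "0 < affinity_const M"
proof -
  have "(0::real) < 1 + exp M" by (simp add: add_pos_pos)
  then show ?thesis unfolding affinity_const_def by simp
qed

lemma sq_diff_le_sigmoid_affinity:
  fixes d u M :: real
  assumes "\<bar>d\<bar> \<le> M" "\<bar>u\<bar> \<le> M"
  shows "(d - u)\<^sup>2 \<le> affinity_const M * (1 - sigmoid_affinity d u)"
proof -
  have "(d - u)\<^sup>2 = \<bar>d - u\<bar>\<^sup>2" by simp
  also have "\<dots> \<le> (exp M * (1 + exp M)\<^sup>2 * \<bar>sigmoid d - sigmoid u\<bar>)\<^sup>2"
    using abs_diff_le_sigmoid_diff[OF assms] by (intro power_mono) auto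
  also have "\<dots> = exp (2 * M) * (1 + exp M) ^ 4 * (sigmoid d - sigmoid u)\<^sup>2"
    by (simp add: power_mult_distrib exp_double[symmetric] mult.commute flip: power_mult)
  also have "\<dots> \<le> exp (2 * M) * (1 + exp M) ^ 4 *
      (8 * (1 - (sqrt (sigmoid d * sigmoid u) + sqrt ((1 - sigmoid d) * (1 - sigmoid u)))))"
    by (intro mult_left_mono sq_diff_le_bernoulli_hellinger)
      (auto simp: sigmoid_pos sigmoid_less_1 less_imp_le)
  finally show ?thesis
    by (simp add: affinity_const_def sigmoid_affinity_def sigmoid_minus algebra_simps)
qed

section \<open>Maximum likelihood over a finite class\<close>

abbreviation E :: "'a pmf \<Rightarrow> ('a \<Rightarrow> real) \<Rightarrow> real" where
  "E M f \<equiv> measure_pmf.expectation M f"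

lemma expectation_bind_pmf_finite:
  assumes "finite (set_pmf M)" "\<And>x. x \<in> set_pmf M \<Longrightarrow> finite (set_pmf (N x))"
  shows "E (bind_pmf M N) f = E M (\<lambda>x. E (N x) f)"
  using assms by (simp add: pmf_expectation_bind[of "set_pmf M"] integral_measure_pmf[of "set_pmf M"])

lemma expectation_pos_finite:
  assumes "finite (set_pmf M)" "\<And>x. x \<in> set_pmf M \<Longrightarrow> 0 < f x"
  shows "0 < E M f"
  using assms
  by (simp add: integral_measure_pmf_real[of "set_pmf M"] sum_pos set_pmf_not_empty pmf_positive)

lemma finite_set_pmf_iid_pmf: "finite (set_pmf p) \<Longrightarrow> finite (set_pmf (iid_pmf n p))"
  by (induction n) auto

lemma expectation_iid_pmf_prod_list:
  assumes "finite (set_pmf p)"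
  shows "E (iid_pmf n p) (\<lambda>D. prod_list (map g D)) = E p g ^ n"
proof (induction n)
  case 0
  then show ?case by simp
next
  case (Suc n)
  have "E (iid_pmf (Suc n) p) (\<lambda>D. prod_list (map g D))
      = E p (\<lambda>a. E (map_pmf (Cons a) (iid_pmf n p)) (\<lambda>D. prod_list (map g D)))"
    using assms by (simp only: iid_pmf.simps, subst expectation_bind_pmf_finite)
      (auto simp: finite_set_pmf_iid_pmf)
  also have "\<dots> = E p (\<lambda>a. g a * E p g ^ n)"
    using Suc by simp
  finally show ?case
    by simp
qed

lemma prob_bind_pmf_ge:
  assumes "\<And>x. x \<in> set_pmf M \<Longrightarrow> c \<le> measure_pmf.prob (N x) A"
  shows "c \<le> measure_pmf.prob (bind_pmf M N) A"
proof (cases "c \<le> 0")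
  case True
  then show ?thesis
    using measure_nonneg order_trans by blast
next
  case False
  have "ennreal c = (\<integral>\<^sup>+x. ennreal c \<partial>M)"
    by (simp add: measure_pmf.emeasure_space_1)
  also have "\<dots> \<le> (\<integral>\<^sup>+x. emeasure (N x) A \<partial>M)"
    using assms by (intro nn_integral_mono_AE)
      (auto simp: AE_measure_pmf_iff measure_pmf.emeasure_eq_measure)
  also have "\<dots> = emeasure (bind_pmf M N) A"
    by simp
  finally show ?thesis
    using False by (simp add: measure_pmf.emeasure_eq_measure)
qed

lemma prob_iid_pmf_exists_prod_list_ge:
  fixes g :: "'b \<Rightarrow> 'a \<Rightarrow> real"
  assumes Q: "finite (set_pmf Q)" and F: "finite F" and \<delta>: "0 < \<delta>"
    and g_pos: "\<And>q z. 0 < g q z"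
  shows "measure_pmf.prob (iid_pmf N Q)
    {D. \<exists>q\<in>F. E Q (g q) ^ N * (card F / \<delta>) \<le> prod_list (map (g q) D)} \<le> \<delta>"
proof (cases "F = {}")
  case True
  then show ?thesis using \<delta> by simp
next
  case False
  then have card: "0 < card F"
    using F card_gt_0_iff by blast
  let ?P = "iid_pmf N Q" and ?c = "card F / \<delta>"
  let ?bad = "\<lambda>q. {D. E Q (g q) ^ N * ?c \<le> prod_list (map (g q) D)}"
  have markov: "measure_pmf.prob ?P (?bad q) \<le> \<delta> / card F" for q
  proof -
    have m_pos: "0 < E Q (g q)"
      using expectation_pos_finite[OF Q] g_pos by blast
    have "measure_pmf.prob ?P {D \<in> space ?P. E Q (g q) ^ N * ?c \<le> prod_list (map (g q) D)}
        \<le> E ?P (\<lambda>D. prod_list (map (g q) D)) / (E Q (g q) ^ N * ?c)"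
      using Q m_pos card \<delta> g_pos
      by (intro integral_Markov_inequality_measure[where A = UNIV] AE_I2 prod_list_nonneg)
        (auto simp: integrable_measure_pmf_finite finite_set_pmf_iid_pmf less_imp_le)
    then have "measure_pmf.prob ?P (?bad q) \<le> E ?P (\<lambda>D. prod_list (map (g q) D)) / (E Q (g q) ^ N * ?c)"
      by simp
    also have "\<dots> = \<delta> / card F"
      using m_pos card \<delta> by (simp add: expectation_iid_pmf_prod_list[OF Q])
    finally show ?thesis .
  qed
  have "{D. \<exists>q\<in>F. E Q (g q) ^ N * ?c \<le> prod_list (map (g q) D)} = (\<Union>q\<in>F. ?bad q)"
    by blast
  also have "measure_pmf.prob ?P \<dots> \<le> (\<Sum>q\<in>F. measure_pmf.prob ?P (?bad q))"
    by (rule measure_pmf.finite_measure_subadditive_finite[OF F]) auto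
  also have "\<dots> \<le> (\<Sum>q\<in>F. \<delta> / card F)"
    by (intro sum_mono markov)
  also have "\<dots> = \<delta>"
    using card by simp
  finally show ?thesis .
qed

lemma one_minus_less_ln_div:
  fixes m c :: real and N :: nat
  assumes m: "0 < m" and c: "0 < c" and N: "0 < N" and "1 < m ^ N * c"
  shows "1 - m < ln c / N"
proof -
  have "0 < ln (m ^ N * c)"
    using assms by simp
  also have "ln (m ^ N * c) = N * ln m + ln c"
    using m c by (simp add: ln_mult ln_realpow)
  finally have "- (N * ln m) < ln c"
    by simp
  moreover have "N * (1 - m) \<le> N * (- ln m)"
    using ln_le_minus_one[OF m] by (intro mult_left_mono) auto
  ultimately show ?thesis
    using N by (simp add: field_simps)
qed

lemma prod_list_exp_half_diff:
  "prod_list (map (\<lambda>z. exp ((f z - g z) / 2)) D)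
    = exp ((sum_list (map f D) - sum_list (map g D)) / (2::real))"
  by (induction D) (simp_all add: exp_add[symmetric] field_simps)

text \<open>For L the negative log-likelihood, exp ((L q0 - L q) / 2) is the square-root likelihood
  ratio of q against q0. Its product over the sample is at least 1 whenever q fits the sample as
  well as q0, and Markov's inequality with a union bound over F makes this unlikely unless its
  mean (the Bhattacharyya affinity, when Q is the law of q0) is close to 1.\<close>
lemma log_loss_minimizer_affinity_bound:
  fixes L :: "'b \<Rightarrow> 'a \<Rightarrow> real"
  assumes Q: "finite (set_pmf Q)" and F: "finite F" and \<delta>: "0 < \<delta>" and N: "0 < N"
  shows "1 - \<delta> \<le> measure_pmf.prob (iid_pmf N Q)
    {D. \<forall>q\<in>F. sum_list (map (L q) D) \<le> sum_list (map (L q0) D) \<longrightarrow>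
       1 - E Q (\<lambda>z. exp ((L q0 z - L q z) / 2)) < ln (card F / \<delta>) / N}"
proof -
  define g where "g = (\<lambda>q z. exp ((L q0 z - L q z) / 2))"
  define bad where "bad = {D. \<exists>q\<in>F. E Q (g q) ^ N * (card F / \<delta>) \<le> prod_list (map (g q) D)}"
  have "1 - \<delta> \<le> 1 - measure_pmf.prob (iid_pmf N Q) bad"
    using prob_iid_pmf_exists_prod_list_ge[OF Q F \<delta>, of g N] by (simp add: bad_def g_def)
  also have "\<dots> = measure_pmf.prob (iid_pmf N Q) (UNIV - bad)"
    using measure_pmf.prob_compl[of bad "iid_pmf N Q"] by simp
  also have "\<dots> \<le> measure_pmf.prob (iid_pmf N Q)
    {D. \<forall>q\<in>F. sum_list (map (L q) D) \<le> sum_list (map (L q0) D) \<longrightarrow>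
       1 - E Q (g q) < ln (card F / \<delta>) / N}"
  proof (rule measure_pmf.finite_measure_mono, safe)
    fix D q
    assume good: "D \<notin> bad" and q: "q \<in> F"
      and le: "sum_list (map (L q) D) \<le> sum_list (map (L q0) D)"
    have "1 \<le> prod_list (map (g q) D)"
      using le by (simp add: g_def prod_list_exp_half_diff)
    also have "\<dots> < E Q (g q) ^ N * (card F / \<delta>)"
      using good q by (auto simp: bad_def)
    finally have ratio: "1 < E Q (g q) ^ N * (card F / \<delta>)" .
    have m_pos: "0 < E Q (g q)"
      using expectation_pos_finite[OF Q] by (simp add: g_def)
    have "0 < card F"
      using q F by (auto simp: card_gt_0_iff)
    then have c_pos: "0 < card F / \<delta>"
      using \<delta> by simp
    show "1 - E Q (g q) < ln (card F / \<delta>) / N"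
      using one_minus_less_ln_div[OF m_pos c_pos N ratio] .
  qed simp
  finally show ?thesis
    by (simp add: g_def)
qed

section \<open>DPO under the Bradley--Terry model\<close>

definition response_pairs :: "nat pmf \<Rightarrow> policy \<Rightarrow> triple pmf" where
  "response_pairs \<rho> \<pi> = bind_pmf \<rho> (\<lambda>x. bind_pmf (\<pi> x) (\<lambda>y1. map_pmf (\<lambda>y2. (x, y1, y2)) (\<pi> x)))"

definition dpo_margin :: "real \<Rightarrow> policy \<Rightarrow> policy \<Rightarrow> triple \<Rightarrow> real" where
  "dpo_margin \<beta> \<pi>t \<pi> = (\<lambda>(x, a, b).
     \<beta> * ln (pmf (\<pi> x) a / pmf (\<pi>t x) a) - \<beta> * ln (pmf (\<pi> x) b / pmf (\<pi>t x) b))"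

lemma dpo_margin_swap: "dpo_margin \<beta> \<pi>t \<pi> (x, b, a) = - dpo_margin \<beta> \<pi>t \<pi> (x, a, b)"
  by (simp add: dpo_margin_def)

lemma dpo_loss_eq_sum_margin:
  "dpo_loss \<beta> \<pi>t D \<pi> = sum_list (map (\<lambda>z. - ln (sigmoid (dpo_margin \<beta> \<pi>t \<pi> z))) D) / length D"
  unfolding dpo_loss_def dpo_margin_def by (simp add: split_def)

lemma set_pmf_response_pairs:
  assumes "set_pmf \<rho> \<subseteq> X" "\<forall>x\<in>X. set_pmf (\<pi> x) = Y"
  shows "set_pmf (response_pairs \<rho> \<pi>) \<subseteq> X \<times> Y \<times> Y"
  using assms unfolding response_pairs_def by auto

lemma bt_sample_eq_bind_response_pairs:
  "bt_sample \<rho> r \<pi> = bind_pmf (response_pairs \<rho> \<pi>) (\<lambda>(x, y1, y2).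
     map_pmf (\<lambda>b. if b then (x, y1, y2) else (x, y2, y1)) (bernoulli_pmf (sigmoid (r x y1 - r x y2))))"
  unfolding bt_sample_def response_pairs_def by (simp add: bind_assoc_pmf bind_map_pmf bind_return_pmf)

lemma expectation_bt_sample:
  assumes "finite (set_pmf (response_pairs \<rho> \<pi>))"
  shows "E (bt_sample \<rho> r \<pi>) f = E (response_pairs \<rho> \<pi>) (\<lambda>(x, y1, y2).
     sigmoid (r x y1 - r x y2) * f (x, y1, y2) + sigmoid (r x y2 - r x y1) * f (x, y2, y1))"
  unfolding bt_sample_eq_bind_response_pairs using assms
  by (subst expectation_bind_pmf_finite)
    (auto simp: sigmoid_pos sigmoid_less_1 less_imp_le split: prod.splits
      intro!: arg_cong[where f = "E _"] simp flip: sigmoid_minus)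

lemma pmf_normalize_policy:
  assumes "finite Y" "\<And>y. y \<in> Y \<Longrightarrow> 0 < w x y" "Y \<noteq> {}"
  shows "pmf (normalize_policy Y w x) y = (if y \<in> Y then w x y / (\<Sum>y'\<in>Y. w x y') else 0)"
proof -
  define f where "f = (\<lambda>y. if y \<in> Y then w x y / (\<Sum>y'\<in>Y. w x y') else 0)"
  have "0 < (\<Sum>y'\<in>Y. w x y')"
    using assms by (intro sum_pos) auto
  then have nonneg: "\<And>y. 0 \<le> f y" and sum_1: "(\<Sum>y\<in>Y. f y) = 1"
    using assms by (auto simp: f_def less_imp_le simp flip: sum_divide_distrib)
  have "(\<integral>\<^sup>+y. ennreal (f y) \<partial>count_space UNIV) = (\<Sum>y\<in>Y. ennreal (f y))"
    using assms by (intro nn_integral_count_space') (auto simp: f_def)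
  also have "\<dots> = 1"
    using nonneg sum_1 by (simp add: sum_ennreal)
  finally have "pmf (embed_pmf f) y = f y"
    by (intro pmf_embed_pmf nonneg)
  then show ?thesis
    by (simp add: normalize_policy_def f_def)
qed

lemma set_pmf_normalize_policy:
  assumes "finite Y" "\<And>y. y \<in> Y \<Longrightarrow> 0 < w x y" "Y \<noteq> {}"
  shows "set_pmf (normalize_policy Y w x) = Y"
proof -
  have "0 < (\<Sum>y'\<in>Y. w x y')"
    using assms by (intro sum_pos) auto
  then show ?thesis
    using assms by (force simp: set_pmf_eq pmf_normalize_policy)
qed

text \<open>The log-partition function of the tilt cancels in the gap.\<close>
lemma dpo_margin_tilt_policy:
  assumes Y: "finite Y" "Y \<noteq> {}" and \<beta>: "0 < \<beta>" and "x \<in> X" "a \<in> Y" "b \<in> Y"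
    and "\<forall>x\<in>X. set_pmf (\<pi> x) = Y" and "\<forall>x\<in>X. \<pi>' x = tilt_policy Y \<beta> r \<pi> x"
  shows "dpo_margin \<beta> \<pi> \<pi>' (x, a, b) = r x a - r x b"
proof -
  have supp: "set_pmf (\<pi> x) = Y" and tilt: "\<pi>' x = tilt_policy Y \<beta> r \<pi> x"
    using assms by auto
  define Z where "Z = (\<Sum>y\<in>Y. pmf (\<pi> x) y * exp (r x y / \<beta>))"
  have w_pos: "0 < pmf (\<pi> x) y * exp (r x y / \<beta>)" if "y \<in> Y" for y
    using supp that by (auto simp: pmf_positive_iff)
  then have "0 < Z"
    using Y unfolding Z_def by (intro sum_pos) auto
  have "\<beta> * ln (pmf (\<pi>' x) y / pmf (\<pi> x) y) = r x y - \<beta> * ln Z" if "y \<in> Y" for y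
  proof -
    have "pmf (\<pi>' x) y = pmf (\<pi> x) y * exp (r x y / \<beta>) / Z"
      using pmf_normalize_policy[OF Y(1), of "\<lambda>x y. pmf (\<pi> x) y * exp (r x y / \<beta>)"]
        Y(2) tilt w_pos that
      by (simp add: tilt_policy_def Z_def)
    moreover have "0 < pmf (\<pi> x) y"
      using supp that by (auto simp: pmf_positive_iff)
    ultimately show ?thesis
      using \<open>0 < Z\<close> \<beta> by (simp add: ln_div right_diff_distrib)
  qed
  then show ?thesis
    using \<open>a \<in> Y\<close> \<open>b \<in> Y\<close> by (simp add: dpo_margin_def)
qed

lemma expectation_sqrt_likelihood_ratio:
  assumes X: "finite X" and Y: "finite Y" "Y \<noteq> {}" and \<rho>: "set_pmf \<rho> \<subseteq> X"
    and p: "\<forall>x\<in>X. set_pmf (p x) = Y" and \<beta>: "0 < \<beta>"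
    and tilt: "\<forall>x\<in>X. \<pi>opt x = tilt_policy Y \<beta> r p x"
  shows "E (bt_sample \<rho> r p)
      (\<lambda>z. exp ((ln (sigmoid (dpo_margin \<beta> p q z)) - ln (sigmoid (dpo_margin \<beta> p \<pi>opt z))) / 2))
    = E (response_pairs \<rho> p)
      (\<lambda>(x, y1, y2). sigmoid_affinity (r x y1 - r x y2) (dpo_margin \<beta> p q (x, y1, y2)))"
proof -
  have pairs: "set_pmf (response_pairs \<rho> p) \<subseteq> X \<times> Y \<times> Y"
    using set_pmf_response_pairs[OF \<rho> p] .
  then have fin: "finite (set_pmf (response_pairs \<rho> p))"
    using X Y finite_subset by blast
  have pointwise: "sigmoid (r x y1 - r x y2) * exp ((ln (sigmoid (dpo_margin \<beta> p q (x, y1, y2)))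
          - ln (sigmoid (dpo_margin \<beta> p \<pi>opt (x, y1, y2)))) / 2)
      + sigmoid (r x y2 - r x y1) * exp ((ln (sigmoid (dpo_margin \<beta> p q (x, y2, y1)))
          - ln (sigmoid (dpo_margin \<beta> p \<pi>opt (x, y2, y1)))) / 2)
      = sigmoid_affinity (r x y1 - r x y2) (dpo_margin \<beta> p q (x, y1, y2))"
    if "x \<in> X" "y1 \<in> Y" "y2 \<in> Y" for x y1 y2
  proof -
    define d u where "d = r x y1 - r x y2" and "u = dpo_margin \<beta> p q (x, y1, y2)"
    have "dpo_margin \<beta> p \<pi>opt (x, y1, y2) = d" "dpo_margin \<beta> p \<pi>opt (x, y2, y1) = - d"
      using dpo_margin_tilt_policy[OF Y \<beta> \<open>x \<in> X\<close> _ _ p tilt] that by (simp_all add: d_def)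
    moreover have "dpo_margin \<beta> p q (x, y2, y1) = - u" "r x y2 - r x y1 = - d"
      by (simp_all add: u_def d_def dpo_margin_swap[where b = y2 and a = y1])
    moreover have "sigmoid v * exp ((ln (sigmoid w) - ln (sigmoid v)) / 2) = sqrt (sigmoid v * sigmoid w)"
      for v w
      by (intro mult_exp_half_ln_diff sigmoid_pos)
    ultimately show ?thesis
      unfolding d_def[symmetric] u_def[symmetric] sigmoid_affinity_def by simp
  qed
  show ?thesis
    unfolding expectation_bt_sample[OF fin] using pairs
    by (intro integral_cong_AE) (auto simp: AE_measure_pmf_iff pointwise)
qed

lemma reward_sq_error_eq_margin:
  assumes \<rho>: "set_pmf \<rho> \<subseteq> X" and p: "\<forall>x\<in>X. set_pmf (p x) = Y" and q: "\<forall>x\<in>X. set_pmf (q x) = Y"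
  shows "reward_sq_error \<rho> r \<beta> p q
    = E (response_pairs \<rho> p) (\<lambda>(x, y1, y2). (r x y1 - r x y2 - dpo_margin \<beta> p q (x, y1, y2))\<^sup>2)"
proof -
  have ln_ratio: "ln (pmf (q x) y / pmf (p x) y) = ln (pmf (q x) y) - ln (pmf (p x) y)"
    if "x \<in> X" "y \<in> Y" for x y
    using p q that by (intro ln_divide_pos) (auto simp: pmf_positive_iff)
  have "(r x y1 - r x y2 - (\<beta> * ln (pmf (q x) y1) - \<beta> * ln (pmf (p x) y1))
        + (\<beta> * ln (pmf (q x) y2) - \<beta> * ln (pmf (p x) y2)))\<^sup>2
      = (r x y1 - r x y2 - dpo_margin \<beta> p q (x, y1, y2))\<^sup>2"
    if "x \<in> X" "y1 \<in> Y" "y2 \<in> Y" for x y1 y2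
    using that by (simp add: dpo_margin_def ln_ratio algebra_simps)
  then show ?thesis
    unfolding reward_sq_error_def Let_def response_pairs_def[symmetric]
    using set_pmf_response_pairs[OF \<rho> p]
    by (intro integral_cong_AE) (auto simp: AE_measure_pmf_iff)
qed

lemma reward_sq_error_le_affinity:
  assumes X: "finite X" and Y: "finite Y" and \<rho>: "set_pmf \<rho> \<subseteq> X"
    and p: "\<forall>x\<in>X. set_pmf (p x) = Y" and q: "\<forall>x\<in>X. set_pmf (q x) = Y"
    and bounded: "\<And>x a b. x \<in> X \<Longrightarrow> a \<in> Y \<Longrightarrow> b \<in> Y \<Longrightarrow>
      \<bar>r x a - r x b\<bar> \<le> M \<and> \<bar>dpo_margin \<beta> p q (x, a, b)\<bar> \<le> M"
  shows "reward_sq_error \<rho> r \<beta> p q \<le> affinity_const M * (1 - E (response_pairs \<rho> p)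
    (\<lambda>(x, y1, y2). sigmoid_affinity (r x y1 - r x y2) (dpo_margin \<beta> p q (x, y1, y2))))"
proof -
  have pairs: "set_pmf (response_pairs \<rho> p) \<subseteq> X \<times> Y \<times> Y"
    using set_pmf_response_pairs[OF \<rho> p] .
  then have fin: "finite (set_pmf (response_pairs \<rho> p))"
    using X Y finite_subset by blast
  have "reward_sq_error \<rho> r \<beta> p q
      \<le> E (response_pairs \<rho> p) (\<lambda>z. affinity_const M * (1 - (case z of (x, y1, y2) \<Rightarrow>
          sigmoid_affinity (r x y1 - r x y2) (dpo_margin \<beta> p q (x, y1, y2)))))"
    unfolding reward_sq_error_eq_margin[OF \<rho> p q] using pairs bounded
    by (intro integral_mono_AE integrable_measure_pmf_finite fin)
      (auto simp: AE_measure_pmf_iff intro!: sq_diff_le_sigmoid_affinity)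
  also have "\<dots> = affinity_const M * (1 - E (response_pairs \<rho> p)
    (\<lambda>(x, y1, y2). sigmoid_affinity (r x y1 - r x y2) (dpo_margin \<beta> p q (x, y1, y2))))"
    using fin by (simp add: integrable_measure_pmf_finite)
  finally show ?thesis .
qed

lemma dpo_reward_sq_error_bound:
  fixes p \<pi>opt :: policy and selD :: "triple list \<Rightarrow> policy"
  assumes X: "finite X" and Y: "finite Y" "Y \<noteq> {}" and \<rho>: "set_pmf \<rho> \<subseteq> X"
    and Pol: "finite Pol" "\<forall>\<pi>\<in>Pol. full_support X Y \<pi>"
    and r: "\<forall>x\<in>X. \<forall>y\<in>Y. \<bar>r x y\<bar> \<le> 1" and \<beta>: "0 < \<beta>" and N: "0 < N" and \<delta>: "0 < \<delta>"
    and argmin: "\<And>D. is_dpo_argmin Pol \<beta> p D (selD D)"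
    and p: "\<forall>x\<in>X. set_pmf (p x) = Y"
    and opt: "\<pi>opt \<in> Pol" "\<forall>x\<in>X. \<pi>opt x = tilt_policy Y \<beta> r p x"
    and bounded: "\<forall>q\<in>Pol. \<forall>x\<in>X. \<forall>y\<in>Y. \<bar>\<beta> * ln (pmf (q x) y / pmf (p x) y)\<bar> \<le> R"
  shows "1 - \<delta> \<le> measure_pmf.prob (iid_pmf N (bt_sample \<rho> r p))
    {D. reward_sq_error \<rho> r \<beta> p (selD D) \<le> affinity_const (2 + 2 * \<bar>R\<bar>) * ln (card Pol / \<delta>) / N}"
proof -
  define K where "K = affinity_const (2 + 2 * \<bar>R\<bar>)"
  define L where "L = (\<lambda>q z. - ln (sigmoid (dpo_margin \<beta> p q z)))"
  define aff where "aff q = E (response_pairs \<rho> p)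
    (\<lambda>(x, y1, y2). sigmoid_affinity (r x y1 - r x y2) (dpo_margin \<beta> p q (x, y1, y2)))" for q
  have "set_pmf (bt_sample \<rho> r p) \<subseteq> X \<times> Y \<times> Y"
    using set_pmf_response_pairs[OF \<rho> p] by (auto simp: bt_sample_eq_bind_response_pairs)
  then have fin: "finite (set_pmf (bt_sample \<rho> r p))"
    using X Y finite_subset by blast
  have affinity: "E (bt_sample \<rho> r p) (\<lambda>z. exp ((L \<pi>opt z - L q z) / 2)) = aff q" for q
    using expectation_sqrt_likelihood_ratio[OF X Y \<rho> p \<beta> opt(2)] by (simp add: L_def aff_def)
  have reward: "reward_sq_error \<rho> r \<beta> p q \<le> K * (1 - aff q)" if q: "q \<in> Pol" for q
    unfolding aff_def K_def
  proof (rule reward_sq_error_le_affinity[OF X Y(1) \<rho> p])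
    show "\<forall>x\<in>X. set_pmf (q x) = Y"
      using Pol(2) q by (simp add: full_support_def)
    fix x a b
    assume "x \<in> X" "a \<in> Y" "b \<in> Y"
    then have "\<bar>r x a\<bar> \<le> 1" "\<bar>r x b\<bar> \<le> 1"
      "\<bar>\<beta> * ln (pmf (q x) a / pmf (p x) a)\<bar> \<le> R" "\<bar>\<beta> * ln (pmf (q x) b / pmf (p x) b)\<bar> \<le> R"
      using r bounded q by auto
    then show "\<bar>r x a - r x b\<bar> \<le> 2 + 2 * \<bar>R\<bar> \<and> \<bar>dpo_margin \<beta> p q (x, a, b)\<bar> \<le> 2 + 2 * \<bar>R\<bar>"
      unfolding dpo_margin_def by (simp add: abs_le_iff)
  qed
  have good: "reward_sq_error \<rho> r \<beta> p (selD D) \<le> K * ln (card Pol / \<delta>) / N"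
    if D: "\<forall>q\<in>Pol. sum_list (map (L q) D) \<le> sum_list (map (L \<pi>opt) D) \<longrightarrow>
      1 - E (bt_sample \<rho> r p) (\<lambda>z. exp ((L \<pi>opt z - L q z) / 2)) < ln (card Pol / \<delta>) / N" for D
  proof -
    have q: "selD D \<in> Pol" and "dpo_loss \<beta> p D (selD D) \<le> dpo_loss \<beta> p D \<pi>opt"
      using argmin[of D] opt(1) by (auto simp: is_dpo_argmin_def)
    then have "sum_list (map (L (selD D)) D) \<le> sum_list (map (L \<pi>opt) D)"
      by (cases "D = []") (auto simp: dpo_loss_eq_sum_margin L_def divide_le_cancel)
    then have "1 - aff (selD D) < ln (card Pol / \<delta>) / N"
      using D q by (simp add: affinity)
    then have "K * (1 - aff (selD D)) \<le> K * (ln (card Pol / \<delta>) / N)"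
      using affinity_const_pos[THEN less_imp_le] unfolding K_def by (intro mult_left_mono) auto
    then show ?thesis
      using reward[OF q] by simp
  qed
  show ?thesis
    using log_loss_minimizer_affinity_bound[OF fin Pol(1) \<delta> N, of L \<pi>opt]
    by (rule order_trans) (auto intro!: measure_pmf.finite_measure_mono good[unfolded K_def])
qed

section \<open>The APO procedure\<close>

lemma apo_state_full_support:
  assumes "finite Y" "Y \<noteq> {}" "\<pi>ref \<in> Pol" "\<forall>\<pi>\<in>Pol. full_support X Y \<pi>"
    and "\<And>s \<pi> D. sel s \<pi> D \<in> Pol"
  shows "(\<pi>, \<pi>h) \<in> set_pmf (apo_state Y \<rho> r \<alpha> N sel \<pi>ref t) \<Longrightarrow>
    \<pi>h \<in> Pol \<and> (\<forall>x\<in>X. set_pmf (\<pi> x) = Y)"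
proof (induction t arbitrary: \<pi> \<pi>h)
  case 0
  then show ?case
    using assms by (auto simp: full_support_def)
next
  case (Suc t)
  then obtain \<pi>0 \<pi>h0 D where prev: "(\<pi>0, \<pi>h0) \<in> set_pmf (apo_state Y \<rho> r \<alpha> N sel \<pi>ref t)"
    and \<pi>: "\<pi> = apo_update Y \<alpha> \<pi>h0 (sel t \<pi>0 D)" and \<pi>h: "\<pi>h = sel t \<pi>0 D"
    by auto
  have "\<pi>h0 \<in> Pol"
    using Suc.IH[OF prev] by blast
  then have "set_pmf (sel t \<pi>0 D x) = Y" "set_pmf (\<pi>h0 x) = Y" if "x \<in> X" for x
    using assms(4,5) that by (auto simp: full_support_def)
  then have pos: "0 < pmf (sel t \<pi>0 D x) y" "0 < pmf (\<pi>h0 x) y" if "x \<in> X" "y \<in> Y" for x y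
    using that by (simp_all add: pmf_positive_iff)
  have "0 < pmf (sel t \<pi>0 D x) y * (pmf (sel t \<pi>0 D x) y / pmf (\<pi>h0 x) y) powr \<alpha>"
    if "x \<in> X" "y \<in> Y" for x y
    using pos[OF that] by simp
  then have "set_pmf (\<pi> x) = Y" if "x \<in> X" for x
    unfolding \<pi> apo_update_def using assms(1,2) that
    by (intro set_pmf_normalize_policy) auto
  then show ?case
    using \<pi>h assms(5) by blast
qed

definition apo_iterates :: "nat set \<Rightarrow> nat pmf \<Rightarrow> (nat \<Rightarrow> nat \<Rightarrow> real) \<Rightarrow> real \<Rightarrow> nat
    \<Rightarrow> (nat \<Rightarrow> policy \<Rightarrow> triple list \<Rightarrow> policy) \<Rightarrow> policy \<Rightarrow> nat \<Rightarrow> policy set" where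
  "apo_iterates Y \<rho> r \<alpha> N sel \<pi>ref T =
     {\<pi>s. \<exists>s\<le>T. \<exists>\<pi>h. (\<pi>s, \<pi>h) \<in> set_pmf (apo_state Y \<rho> r \<alpha> N sel \<pi>ref s)}"

lemma apo_reward_sq_error_bound:
  assumes X: "finite X" and Y: "finite Y" "Y \<noteq> {}" and \<rho>: "set_pmf \<rho> \<subseteq> X"
    and Pol: "finite Pol" "\<forall>\<pi>\<in>Pol. full_support X Y \<pi>"
    and r: "\<forall>x\<in>X. \<forall>y\<in>Y. \<bar>r x y\<bar> \<le> 1" and ref: "\<pi>ref \<in> Pol" and \<beta>: "0 < \<beta>" and N: "0 < N"
    and \<delta>: "0 < \<delta>" and tT: "t \<le> T"
    and argmin: "\<forall>s \<pi> D. is_dpo_argmin Pol \<beta> \<pi> D (sel s \<pi> D)"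
    and realizable: "\<forall>\<pi> \<in> apo_iterates Y \<rho> r \<alpha> N sel \<pi>ref T.
      \<exists>\<pi>'\<in>Pol. \<forall>x\<in>X. \<pi>' x = tilt_policy Y \<beta> r \<pi> x"
    and bounded: "\<forall>\<pi>\<in>Pol. \<forall>\<pi>s \<in> apo_iterates Y \<rho> r \<alpha> N sel \<pi>ref T.
      \<forall>x\<in>X. \<forall>y\<in>Y. \<bar>\<beta> * ln (pmf (\<pi> x) y / pmf (\<pi>s x) y)\<bar> \<le> R"
  shows "1 - \<delta> \<le> measure_pmf.prob (apo_round Y \<rho> r \<alpha> N sel \<pi>ref t)
    {(\<pi>t, \<pi>hat). reward_sq_error \<rho> r \<beta> \<pi>t \<pi>hat
      \<le> affinity_const (2 + 2 * \<bar>R\<bar>) * ln (card Pol / \<delta>) / N}"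
  unfolding apo_round_def
proof (rule prob_bind_pmf_ge)
  fix st
  assume st: "st \<in> set_pmf (apo_state Y \<rho> r \<alpha> N sel \<pi>ref t)"
  obtain p \<pi>h where st_eq: "st = (p, \<pi>h)"
    by fastforce
  have sel: "\<And>s \<pi> D. sel s \<pi> D \<in> Pol"
    using argmin by (simp add: is_dpo_argmin_def)
  have iterate: "p \<in> apo_iterates Y \<rho> r \<alpha> N sel \<pi>ref T"
    using st st_eq tT by (auto simp: apo_iterates_def)
  then obtain \<pi>opt where opt: "\<pi>opt \<in> Pol" "\<forall>x\<in>X. \<pi>opt x = tilt_policy Y \<beta> r p x"
    using realizable by blast
  have "\<forall>x\<in>X. set_pmf (p x) = Y"
    using apo_state_full_support[where sel = sel, OF Y ref Pol(2) sel] st st_eq by blast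
  moreover have "\<forall>q\<in>Pol. \<forall>x\<in>X. \<forall>y\<in>Y. \<bar>\<beta> * ln (pmf (q x) y / pmf (p x) y)\<bar> \<le> R"
    using bounded iterate by blast
  moreover have "\<And>D. is_dpo_argmin Pol \<beta> p D (sel t p D)"
    using argmin by blast
  ultimately have "1 - \<delta> \<le> measure_pmf.prob (iid_pmf N (bt_sample \<rho> r p))
    {D. reward_sq_error \<rho> r \<beta> p (sel t p D)
      \<le> affinity_const (2 + 2 * \<bar>R\<bar>) * ln (card Pol / \<delta>) / N}"
    using dpo_reward_sq_error_bound[OF X Y \<rho> Pol r \<beta> N \<delta> _ _ opt] by blast
  then show "1 - \<delta> \<le> measure_pmf.prob
    ((\<lambda>(\<pi>, \<pi>hat). map_pmf (\<lambda>D. (\<pi>, sel t \<pi> D)) (iid_pmf N (bt_sample \<rho> r \<pi>))) st)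
    {(\<pi>t, \<pi>hat). reward_sq_error \<rho> r \<beta> \<pi>t \<pi>hat
      \<le> affinity_const (2 + 2 * \<bar>R\<bar>) * ln (card Pol / \<delta>) / N}"
    by (simp add: st_eq vimage_def)
qed

theorem lemma3:
  fixes R :: real
  shows "\<exists>C>0. \<forall>(X :: nat set) (Y :: nat set) (\<rho> :: nat pmf) (r :: nat \<Rightarrow> nat \<Rightarrow> real)
      (Pol :: policy set) (\<pi>ref :: policy) (\<beta> :: real) (\<alpha> :: real) (T :: nat) (N :: nat)
      (sel :: nat \<Rightarrow> policy \<Rightarrow> triple list \<Rightarrow> policy) (\<delta> :: real) (t :: nat).
    finite X \<and> finite Y \<and> Y \<noteq> {} \<and> set_pmf \<rho> \<subseteq> X
    \<and> finite Pol \<and> (\<forall>\<pi>\<in>Pol. full_support X Y \<pi>)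
    \<and> (\<forall>x\<in>X. \<forall>y\<in>Y. \<bar>r x y\<bar> \<le> 1)
    \<and> \<pi>ref \<in> Pol \<and> \<beta> > 0 \<and> N > 0 \<and> 0 < \<delta> \<and> \<delta> < 1 \<and> t \<le> T
    \<and> (\<forall>s \<pi> D. is_dpo_argmin Pol \<beta> \<pi> D (sel s \<pi> D))
    \<comment> \<open>realizability, for the policies of the class and for the iterates pi_s, s \<le> T\<close>
    \<and> (\<forall>\<pi> \<in> Pol \<union> {\<pi>s. \<exists>s\<le>T. \<exists>\<pi>h. (\<pi>s, \<pi>h) \<in> set_pmf (apo_state Y \<rho> r \<alpha> N sel \<pi>ref s)}.
         \<exists>\<pi>'\<in>Pol. \<forall>x\<in>X. \<pi>' x = tilt_policy Y \<beta> r \<pi> x)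
    \<comment> \<open>boundedness, for pi in the class and pi_t in the class or an iterate\<close>
    \<and> (\<forall>\<pi>\<in>Pol. \<forall>\<pi>s \<in> Pol \<union> {\<pi>s. \<exists>s\<le>T. \<exists>\<pi>h. (\<pi>s, \<pi>h) \<in> set_pmf (apo_state Y \<rho> r \<alpha> N sel \<pi>ref s)}.
         \<forall>x\<in>X. \<forall>y\<in>Y. \<bar>\<beta> * ln (pmf (\<pi> x) y / pmf (\<pi>s x) y)\<bar> \<le> R)
    \<longrightarrow> measure_pmf.prob (apo_round Y \<rho> r \<alpha> N sel \<pi>ref t)
          {(\<pi>t, \<pi>hat). reward_sq_error \<rho> r \<beta> \<pi>t \<pi>hat \<le> C * ln (real (card Pol) / \<delta>) / real N}
        \<ge> 1 - \<delta>"
  by (intro exI[of _ "affinity_const (2 + 2 * \<bar>R\<bar>)"] conjI affinity_const_pos allI impI,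
      elim conjE, rule apo_reward_sq_error_bound)
    (unfold apo_iterates_def, (assumption | blast)+)

end
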